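(* Let $R$ be a reference string ending with the end-of-string character $\#$, and let ${\cal C}$ be the concatenation of a collection of strings $S_1,\dots,S_m$, each terminated by an end-of-string character, with total length $N$. Let $1\le i,j\le N$. If $\textit{ip}(i)=\textit{ip}(j)$ and neither $i$ nor $j$ is an insert-head, then $\textit{suf}_i$ and $\textit{suf}_j$ are preceded by the same character $c=R[\textit{SA}_R[\textit{ip}(i)]-1]$, i.e. ${\cal C}[i-1]={\cal C}[j-1]=c=R[\textit{SA}_R[\textit{ip}(i)]-1]$.
   Context: Strings are indexed from 1; $T[i..j]$ is a substring, $\textit{suf}_i=T[i..]$. The character $\#$ is smaller than every other character, and smaller than the end-of-string characters of ${\cal C}$ (which are smaller than all other characters of ${\cal C}$). It is assumed every character of ${\cal C}$ occurs in $R$. $\textit{SA}_R$ is the suffix array of $R$: $\textit{SA}_R[k]$ is the starting position of the $k$-th smallest suffix of $R$ in lexicographic order. For a position $i$ of ${\cal C}$, the matching factor $U_i$ is the longest prefix of $\textit{suf}_i({\cal C})$ occurring as a substring of $R$, $\ell_i=|U_i|$, and $c_i={\cal C}[i+\ell_i]$ is the mismatch character. The insert point of $i$ is $\textit{ip}(i)=1$ if $U_i$ is empty; otherwise $\textit{ip}(i)=\max\{k : U_i \text{ is a prefix of } R[\textit{SA}_R[k]..] \text{ and } R[\textit{SA}_R[k]..]<U_ic_i\}$ if this set is nonempty, and $\textit{ip}(i)=\min\{k: U_i\text{ is a prefix of } R[\textit{SA}_R[k]..]\}$ otherwise. A position $j$ of ${\cal C}$ is an insert-head if $\textit{SA}_R[\textit{ip}(j)]\neq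 \textit{SA}_R[\textit{ip}(j-1)]+1$. *)

theory Defs
  imports Main "HOL-Library.Sublist"
begin

text \<open>Strings are lists; positions are 1-based as in the paper.\<close>

definition chr :: "'a list \<Rightarrow> nat \<Rightarrow> 'a" where
  "chr T k = T ! (k - 1)"

definition suf :: "'a list \<Rightarrow> nat \<Rightarrow> 'a list" where
  "suf T k = drop (k - 1) T"

text \<open>Strict lexicographic order on strings (a proper prefix is smaller).\<close>
definition lex_less :: "'a::linorder list \<Rightarrow> 'a list \<Rightarrow> bool" where
  "lex_less xs ys \<longleftrightarrow> (xs, ys) \<in> lexord {(a, b). a < b}"

definition SA :: "'a::linorder list \<Rightarrow> nat \<Rightarrow> nat" where
  "SA R k = (THE p. p \<in> {1..length R} \<and>
       card {q \<in> {1..length R}. lex_less (suf R q) (suf R p)} = k - 1)"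

definition mlen :: "'a list \<Rightarrow> 'a list \<Rightarrow> nat \<Rightarrow> nat" where
  "mlen R C i = (GREATEST l. l \<le> length (suf C i) \<and> sublist (take l (suf C i)) R)"

definition mfactor :: "'a list \<Rightarrow> 'a list \<Rightarrow> nat \<Rightarrow> 'a list" where
  "mfactor R C i = take (mlen R C i) (suf C i)"

definition mischar :: "'a list \<Rightarrow> 'a list \<Rightarrow> nat \<Rightarrow> 'a" where
  "mischar R C i = chr C (i + mlen R C i)"

definition ip :: "'a::linorder list \<Rightarrow> 'a list \<Rightarrow> nat \<Rightarrow> nat" where
  "ip R C i =
    (let U = mfactor R C i; c = mischar R C i;
         A = {k \<in> {1..length R}. prefix U (suf R (SA R k)) \<and> lex_less (suf R (SA R k)) (U @ [c])};
         B = {k \<in> {1..length R}. prefix U (suf R (SA R k))}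
     in if U = [] then 1 else if A \<noteq> {} then Max A else Min B)"

text \<open>Insert-head. Position 1 has no predecessor position, so it is treated as an
  insert-head by convention.\<close>
definition insert_head :: "'a::linorder list \<Rightarrow> 'a list \<Rightarrow> nat \<Rightarrow> bool" where
  "insert_head R C j \<longleftrightarrow> j = 1 \<or> SA R (ip R C j) \<noteq> SA R (ip R C (j - 1)) + 1"

end

theory Submission
  imports Defs
begin

text \<open>If \<open>j\<close> is not an insert-head, the suffix of \<open>R\<close> starting at \<open>SA\<^sub>R[ip(j)]\<close> is the
  suffix starting at \<open>SA\<^sub>R[ip(j-1)]\<close> with its first character removed, so
  \<open>R[SA\<^sub>R[ip(j)] - 1]\<close> is the first character of the latter. Because every character
  of \<open>C\<close> occurs in \<open>R\<close>, the matching factor \<open>U_{j-1}\<close> is nonempty, and the insert point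
  is chosen among the suffixes of \<open>R\<close> having \<open>U_{j-1}\<close> as a prefix; hence that first
  character is \<open>C[j-1]\<close>.\<close>

lemma lex_less_irrefl: "\<not> lex_less (xs::'a::linorder list) xs"
  unfolding lex_less_def by (rule lexord_irreflexive) auto

lemma lex_less_trans:
  "lex_less (xs::'a::linorder list) ys \<Longrightarrow> lex_less ys zs \<Longrightarrow> lex_less xs zs"
  unfolding lex_less_def by (erule lexord_trans) (auto simp: trans_def)

lemma lex_less_linear:
  "(xs::'a::linorder list) \<noteq> ys \<Longrightarrow> lex_less xs ys \<or> lex_less ys xs"
  unfolding lex_less_def using total_lexord[of "{(a, b). (a::'a) < b}"]
  by (auto simp: total_on_def neq_iff)

lemma inj_on_suf: "inj_on (suf T) {1..length T}"
  by (rule inj_onI) (auto simp: suf_def dest: arg_cong[where f = length])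

definition suffix_rank :: "'a::linorder list \<Rightarrow> nat \<Rightarrow> nat" where
  "suffix_rank R p = card {q \<in> {1..length R}. lex_less (suf R q) (suf R p)}"

lemma suffix_rank_less_length:
  assumes "p \<in> {1..length R}"
  shows "suffix_rank R p < length R"
proof -
  have "{q \<in> {1..length R}. lex_less (suf R q) (suf R p)} \<subset> {1..length R}"
    using assms lex_less_irrefl by blast
  then show ?thesis
    unfolding suffix_rank_def by (metis card_atLeastAtMost diff_Suc_1 finite_atLeastAtMost psubset_card_mono)
qed

lemma suffix_rank_strict_mono:
  assumes "q \<in> {1..length R}" and "lex_less (suf R q) (suf R p)"
  shows "suffix_rank R q < suffix_rank R p"
proof -
  let ?below = "\<lambda>p. {q' \<in> {1..length R}. lex_less (suf R q') (suf R p)}"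
  have "q \<notin> ?below q"
    using lex_less_irrefl by blast
  then have "Suc (card (?below q)) = card (insert q (?below q))"
    by simp
  also have "\<dots> \<le> card (?below p)"
    using assms lex_less_trans by (intro card_mono) auto
  finally show ?thesis
    unfolding suffix_rank_def by simp
qed

lemma inj_on_suffix_rank: "inj_on (suffix_rank R) {1..length R}"
proof (rule inj_onI, rule ccontr)
  fix p q
  assume p: "p \<in> {1..length R}" and q: "q \<in> {1..length R}"
    and same_rank: "suffix_rank R p = suffix_rank R q" and "p \<noteq> q"
  then have "suf R p \<noteq> suf R q"
    using inj_on_suf[of R] by (auto dest: inj_onD)
  then show False
    using lex_less_linear suffix_rank_strict_mono[OF p] suffix_rank_strict_mono[OF q] same_rank
    by fastforce
qed

lemma SA_suffix_rank:
  assumes p: "p \<in> {1..length R}"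
  shows "SA R (suffix_rank R p + 1) = p"
  unfolding SA_def
proof (rule the_equality)
  show "p \<in> {1..length R} \<and> card {q \<in> {1..length R}. lex_less (suf R q) (suf R p)} = suffix_rank R p + 1 - 1"
    using p by (simp add: suffix_rank_def)
next
  fix q
  assume "q \<in> {1..length R} \<and> card {q' \<in> {1..length R}. lex_less (suf R q') (suf R q)} = suffix_rank R p + 1 - 1"
  then show "q = p"
    using p inj_on_suffix_rank[of R] unfolding suffix_rank_def by (auto dest: inj_onD)
qed

lemma mlen_bounded_sublist:
  "mlen R C n \<le> length (suf C n) \<and> sublist (take (mlen R C n) (suf C n)) R"
  unfolding mlen_def by (rule GreatestI_nat[where k = 0]) auto

lemma sublist_mfactor: "sublist (mfactor R C n) R"
  using mlen_bounded_sublist unfolding mfactor_def by blast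

lemma mfactor_nonempty:
  assumes n: "1 \<le> n" "n \<le> length C" and occurs: "chr C n \<in> set R"
  shows "mfactor R C n \<noteq> []"
proof -
  have "take 1 (suf C n) = [chr C n]"
    using n by (simp add: suf_def chr_def take_Suc_conv_app_nth)
  moreover have "sublist [chr C n] R"
    using occurs unfolding sublist_def in_set_conv_decomp by fastforce
  ultimately have "1 \<le> mlen R C n"
    unfolding mlen_def using n by (intro Greatest_le_nat[where b = "length (suf C n)"]) (auto simp: suf_def)
  then show ?thesis
    using n unfolding mfactor_def suf_def by auto
qed

lemma hd_mfactor: "mfactor R C n \<noteq> [] \<Longrightarrow> hd (mfactor R C n) = chr C n"
  unfolding mfactor_def suf_def chr_def by (simp add: hd_drop_conv_nth)

lemma prefix_mfactor_suf_SA_ip: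
  fixes R :: "'a::linorder list"
  assumes U_ne: "mfactor R C n \<noteq> []"
  shows "prefix (mfactor R C n) (suf R (SA R (ip R C n)))"
proof -
  let ?U = "mfactor R C n"
  define A where "A = {k \<in> {1..length R}. prefix ?U (suf R (SA R k))
                        \<and> lex_less (suf R (SA R k)) (?U @ [mischar R C n])}"
  define B where "B = {k \<in> {1..length R}. prefix ?U (suf R (SA R k))}"
  obtain ps ss where R: "R = ps @ ?U @ ss"
    using sublist_mfactor[of R C n] by (auto simp: sublist_def)
  define p where "p = length ps + 1"
  have p: "p \<in> {1..length R}"
    using U_ne R by (cases "mfactor R C n") (auto simp: p_def)
  have "prefix ?U (suf R p)"
    using arg_cong[OF R, of "drop (length ps)"] by (simp add: p_def suf_def)
  then have "prefix ?U (suf R (SA R (suffix_rank R p + 1)))"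
    by (simp only: SA_suffix_rank[OF p])
  moreover have "suffix_rank R p + 1 \<in> {1..length R}"
    using suffix_rank_less_length[OF p] by simp
  ultimately have "B \<noteq> {}"
    unfolding B_def by blast
  moreover have "A \<subseteq> B" "finite B"
    unfolding A_def B_def by auto
  moreover have "ip R C n = (if A \<noteq> {} then Max A else Min B)"
    using U_ne unfolding ip_def A_def B_def Let_def by simp
  ultimately have "ip R C n \<in> B"
    by (auto intro: Max_in Min_in finite_subset)
  then show ?thesis
    unfolding B_def by blast
qed

lemma chr_SA_ip:
  fixes R :: "'a::linorder list"
  assumes "mfactor R C n \<noteq> []"
  shows "chr R (SA R (ip R C n)) = chr C n"
proof -
  obtain t where t: "suf R (SA R (ip R C n)) = mfactor R C n @ t"
    using prefix_mfactor_suf_SA_ip[OF assms] by (auto simp: prefix_def)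
  then have "drop (SA R (ip R C n) - 1) R \<noteq> []"
    using assms by (simp add: suf_def)
  then have "chr R (SA R (ip R C n)) = hd (suf R (SA R (ip R C n)))"
    by (simp add: suf_def chr_def hd_drop_conv_nth)
  then show ?thesis
    using t assms hd_mfactor by simp
qed

lemma chr_pred_not_insert_head:
  fixes R :: "'a::linorder list"
  assumes not_head: "\<not> insert_head R C x" and x: "x \<le> length C" and occurs: "set C \<subseteq> set R"
  shows "chr C (x - 1) = chr R (SA R (ip R C x) - 1)"
proof -
  have "x \<noteq> 1" and SA_succ: "SA R (ip R C x) = SA R (ip R C (x - 1)) + 1"
    using not_head unfolding insert_head_def by auto
  then have "1 \<le> x - 1"
    using SA_succ by (cases x) auto
  moreover have "chr C (x - 1) \<in> set R"
    using \<open>1 \<le> x - 1\<close> x occurs by (auto simp: chr_def)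
  ultimately have "mfactor R C (x - 1) \<noteq> []"
    using x by (intro mfactor_nonempty) auto
  then show ?thesis
    using SA_succ chr_SA_ip by fastforce
qed

theorem lemma5:
  fixes R :: "'a::linorder list" and Ss :: "'a list list" and E :: "'a set"
    and hash :: 'a and i j :: nat
  assumes R_end: "R \<noteq> []" "last R = hash" "hash \<notin> set (butlast R)"
    and hash_min: "\<forall>x. x \<noteq> hash \<longrightarrow> hash < x"
    and E_gt_hash: "\<forall>e\<in>E. hash < e"
    and strings_term: "\<forall>S\<in>set Ss. S \<noteq> [] \<and> last S \<in> E \<and> set (butlast S) \<inter> E = {}"
    and E_min: "\<forall>x\<in>set (concat Ss). x \<notin> E \<longrightarrow> (\<forall>e\<in>E. e < x)"
    and chars_in_R: "set (concat Ss) \<subseteq> set R"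
    and i_range: "1 \<le> i" "i \<le> length (concat Ss)"
    and j_range: "1 \<le> j" "j \<le> length (concat Ss)"
    and same_ip: "ip R (concat Ss) i = ip R (concat Ss) j"
    and not_head_i: "\<not> insert_head R (concat Ss) i"
    and not_head_j: "\<not> insert_head R (concat Ss) j"
  shows "chr (concat Ss) (i - 1) = chr R (SA R (ip R (concat Ss) i) - 1)
       \<and> chr (concat Ss) (j - 1) = chr R (SA R (ip R (concat Ss) i) - 1)"
  using chr_pred_not_insert_head[OF not_head_i i_range(2) chars_in_R]
    chr_pred_not_insert_head[OF not_head_j j_range(2) chars_in_R] same_ip
  by simp

end
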